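(* Let $\mathcal{G}=(V,L)$ be a finite connected undirected graph with monitor set $M$ and non-monitor set $N=V\setminus M$, with measurement paths given by Controllable Simple-path Probing (CSP). Let $S\subseteq N$ and $k\ge1$. (a) If for every node set $V'\subseteq V$ with $|V'|\le k+1$ containing at most one monitor, each connected component of $\mathcal{G}-V'$ that contains a node of $S$ also contains a monitor, then $S$ is $k$-identifiable. (b) If $S$ is $k$-identifiable, then for every node set $V'\subseteq V$ with $|V'|\le k$ containing at most one monitor, each connected component of $\mathcal{G}-V'$ that contains a node of $S$ also contains a monitor.
   Context: $\mathcal{G}-V'$ denotes deletion of the nodes of $V'$ and incident links. Under CSP, the measurement paths $P$ are all simple paths (no repeated nodes) in $\mathcal{G}$ between two distinct monitors. A failure set is any $F\subseteq N$; a path fails iff it traverses a node of $F$. $P_F$ is the set of paths in $P$ traversing a node of $F$; $F_1,F_2$ distinguishable iff $P_{F_1}\ne P_{F_2}$. $S\subseteq N$ is $k$-identifiable if any two failure sets $F_1,F_2$ with $|F_1|,|F_2|\le k$ and $F_1\cap S\ne F_2\cap S$ are distinguishable. *)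

theory Defs
  imports Main
begin

definition undirected_graph :: "'a set \<Rightarrow> 'a set set \<Rightarrow> bool" where
  "undirected_graph V L \<longleftrightarrow> finite V \<and> (\<forall>e\<in>L. e \<subseteq> V \<and> card e = 2)"

definition walk_in :: "'a set \<Rightarrow> 'a set set \<Rightarrow> 'a list \<Rightarrow> bool" where
  "walk_in X L p \<longleftrightarrow> p \<noteq> [] \<and> set p \<subseteq> X \<and>
     (\<forall>i. Suc i < length p \<longrightarrow> {p ! i, p ! Suc i} \<in> L)"

definition connected_in :: "'a set \<Rightarrow> 'a set set \<Rightarrow> 'a \<Rightarrow> 'a \<Rightarrow> bool" where
  "connected_in X L u v \<longleftrightarrow> (\<exists>p. walk_in X L p \<and> hd p = u \<and> last p = v)"

definition connected_graph :: "'a set \<Rightarrow> 'a set set \<Rightarrow> bool" where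
  "connected_graph V L \<longleftrightarrow> (\<forall>u\<in>V. \<forall>v\<in>V. connected_in V L u v)"

text \<open>Connected components of the subgraph induced by X (for X = V - V' this is G - V').\<close>
definition components :: "'a set \<Rightarrow> 'a set set \<Rightarrow> 'a set set" where
  "components X L = {{v. connected_in X L u v} | u. u \<in> X}"

definition csp_paths :: "'a set \<Rightarrow> 'a set set \<Rightarrow> 'a set \<Rightarrow> 'a list set" where
  "csp_paths V L M = {p. walk_in V L p \<and> distinct p \<and> hd p \<in> M \<and> last p \<in> M \<and> hd p \<noteq> last p}"

definition failed_paths :: "'a list set \<Rightarrow> 'a set \<Rightarrow> 'a list set" where
  "failed_paths P F = {p \<in> P. set p \<inter> F \<noteq> {}}"

definition k_identifiable :: "'a set \<Rightarrow> 'a set set \<Rightarrow> 'a set \<Rightarrow> 'a set \<Rightarrow> nat \<Rightarrow> bool" where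
  "k_identifiable V L M S k \<longleftrightarrow>
     (\<forall>F1 F2. F1 \<subseteq> V - M \<longrightarrow> F2 \<subseteq> V - M \<longrightarrow> card F1 \<le> k \<longrightarrow> card F2 \<le> k \<longrightarrow>
        F1 \<inter> S \<noteq> F2 \<inter> S \<longrightarrow>
        failed_paths (csp_paths V L M) F1 \<noteq> failed_paths (csp_paths V L M) F2)"

definition cut_condition :: "'a set \<Rightarrow> 'a set set \<Rightarrow> 'a set \<Rightarrow> 'a set \<Rightarrow> nat \<Rightarrow> bool" where
  "cut_condition V L M S c \<longleftrightarrow>
     (\<forall>V'. V' \<subseteq> V \<longrightarrow> card V' \<le> c \<longrightarrow> card (V' \<inter> M) \<le> 1 \<longrightarrow>
        (\<forall>C\<in>components (V - V') L. C \<inter> S \<noteq> {} \<longrightarrow> C \<inter> M \<noteq> {}))"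

end

theory Submission
  imports Defs
begin

text \<open>
  (a) If failure sets \<open>F\<^sub>1\<close>, \<open>F\<^sub>2\<close> of size at most \<open>k\<close> differ at \<open>s \<in> S\<close>, say \<open>s \<in> F\<^sub>1 - F\<^sub>2\<close>,
  then deleting \<open>F\<^sub>2\<close> and one more node deletes at most \<open>k + 1\<close> nodes, at most one of them a
  monitor, so in \<open>G - F\<^sub>2\<close> the node \<open>s\<close> still reaches a monitor after the deletion of any other
  single node. A Menger-type argument (induction along a path from \<open>s\<close> to a monitor, rerouting a
  CSP path through the successor of \<open>s\<close> so that it passes through \<open>s\<close>) then gives a CSP path
  through \<open>s\<close> in \<open>G - F\<^sub>2\<close>; it fails under \<open>F\<^sub>1\<close> but not under \<open>F\<^sub>2\<close>.

  (b) If a component \<open>C\<close> of \<open>G - V'\<close> contains \<open>s \<in> S\<close> but no monitor, every CSP path through \<open>s\<close>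
  enters and leaves \<open>C\<close> and so meets \<open>V'\<close> in two distinct nodes, of which at most one is the
  monitor of \<open>V'\<close> (if any). Removing that monitor, or an arbitrary node, from \<open>V'\<close> yields a
  failure set \<open>F\<close> with \<open>|F| < k\<close> such that \<open>F\<close> and \<open>F \<union> {s}\<close> fail the same paths.
\<close>

lemma walk_in_Nil [simp]: "\<not> walk_in X L []"
  by (simp add: walk_in_def)

lemma walk_in_singleton [simp]: "walk_in X L [x] \<longleftrightarrow> x \<in> X"
  by (simp add: walk_in_def)

lemma walk_in_Cons_Cons [simp]:
  "walk_in X L (x # y # ys) \<longleftrightarrow> x \<in> X \<and> {x, y} \<in> L \<and> walk_in X L (y # ys)"
proof -
  have "(\<forall>i. Suc i < length (x # y # ys) \<longrightarrow> P i) \<longleftrightarrow>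
        P 0 \<and> (\<forall>i. Suc i < length (y # ys) \<longrightarrow> P (Suc i))" for P
    by (auto simp: less_Suc_eq_0_disj)
  then show ?thesis
    unfolding walk_in_def by auto
qed

lemma walk_in_Cons:
  "walk_in X L (x # p) \<longleftrightarrow> x \<in> X \<and> (p = [] \<or> {x, hd p} \<in> L \<and> walk_in X L p)"
  by (cases p) auto

lemma walk_in_append:
  "xs \<noteq> [] \<Longrightarrow> ys \<noteq> [] \<Longrightarrow>
   walk_in X L (xs @ ys) \<longleftrightarrow> walk_in X L xs \<and> walk_in X L ys \<and> {last xs, hd ys} \<in> L"
proof (induction xs rule: list_nonempty_induct)
  case (single x)
  then show ?case by (cases ys) auto
next
  case (cons x xs)
  then show ?case by (cases xs) auto
qed

lemma walk_in_prefix: "walk_in X L (xs @ ys) \<Longrightarrow> xs \<noteq> [] \<Longrightarrow> walk_in X L xs"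
  by (cases "ys = []") (auto simp: walk_in_append)

lemma walk_in_suffix: "walk_in X L (xs @ ys) \<Longrightarrow> ys \<noteq> [] \<Longrightarrow> walk_in X L ys"
  by (cases "xs = []") (auto simp: walk_in_append)

lemma walk_in_join:
  "walk_in X L (xs @ [y]) \<Longrightarrow> walk_in X L (y # ys) \<Longrightarrow> walk_in X L (xs @ y # ys)"
  by (cases "xs = []") (auto simp: walk_in_append[of xs "[y]"] walk_in_append[of xs "y # ys"])

lemma walk_in_rev [simp]: "walk_in X L (rev p) \<longleftrightarrow> walk_in X L p"
proof (induction p)
  case (Cons x p)
  show ?case
  proof (cases "p = []")
    case False
    then show ?thesis
      using Cons.IH by (auto simp: walk_in_append walk_in_Cons last_rev insert_commute)
  qed simp
qed simp

lemma walk_in_set: "walk_in X L p \<Longrightarrow> set p \<subseteq> X"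
  by (simp add: walk_in_def)

lemma walk_in_restrict: "walk_in X L p \<Longrightarrow> set p \<subseteq> Y \<Longrightarrow> walk_in Y L p"
  by (simp add: walk_in_def)

lemma walk_in_mono: "walk_in X L p \<Longrightarrow> X \<subseteq> Y \<Longrightarrow> walk_in Y L p"
  by (auto simp: walk_in_def)

lemma walk_in_remove_cycles:
  "walk_in X L p \<Longrightarrow> \<exists>q. walk_in X L q \<and> distinct q \<and> hd q = hd p \<and> last q = last p"
proof (induction p)
  case (Cons x p)
  show ?case
  proof (cases "p = []")
    case True
    with Cons.prems show ?thesis by (intro exI[of _ "[x]"]) auto
  next
    case False
    with Cons.prems have x: "x \<in> X" "{x, hd p} \<in> L" and "walk_in X L p"
      by (auto simp: walk_in_Cons)
    with Cons.IH obtain q where q: "walk_in X L q" "distinct q" "hd q = hd p" "last q = last p"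
      by blast
    show ?thesis
    proof (cases "x \<in> set q")
      case True
      then obtain a b where "q = a @ x # b" by (metis split_list)
      with q False show ?thesis
        by (intro exI[of _ "x # b"]) (auto dest: walk_in_suffix)
    next
      case False
      with q x \<open>p \<noteq> []\<close> show ?thesis
        by (intro exI[of _ "x # q"]) (auto simp: walk_in_Cons)
    qed
  qed
qed simp

lemma connected_in_refl: "x \<in> X \<Longrightarrow> connected_in X L x x"
  unfolding connected_in_def by (rule exI[of _ "[x]"]) simp

lemma connected_in_edge: "x \<in> X \<Longrightarrow> y \<in> X \<Longrightarrow> {x, y} \<in> L \<Longrightarrow> connected_in X L x y"
  unfolding connected_in_def by (rule exI[of _ "[x, y]"]) simp

lemma connected_in_trans:
  assumes "connected_in X L u v" and "connected_in X L v w"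
  shows "connected_in X L u w"
proof -
  obtain p q where p: "walk_in X L p" "hd p = u" "last p = v"
    and q: "walk_in X L q" "hd q = v" "last q = w"
    using assms by (auto simp: connected_in_def)
  obtain q' where q': "q = v # q'"
    using q by (cases q) auto
  show ?thesis
  proof (cases "q' = []")
    case True
    with p q q' show ?thesis by (auto simp: connected_in_def)
  next
    case False
    moreover have "p \<noteq> []"
      using p(1) by auto
    ultimately have "walk_in X L (p @ q')"
      using p q q' by (auto simp: walk_in_append walk_in_Cons)
    with p q q' False \<open>p \<noteq> []\<close> show ?thesis
      unfolding connected_in_def by (intro exI[of _ "p @ q'"]) auto
  qed
qed

lemma connected_in_path:
  "connected_in X L u v \<Longrightarrow> \<exists>q. walk_in X L q \<and> distinct q \<and> hd q = u \<and> last q = v"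
  unfolding connected_in_def using walk_in_remove_cycles by blast

lemma components_subset: "C \<in> components X L \<Longrightarrow> C \<subseteq> X"
  by (auto simp: components_def connected_in_def walk_in_def)

lemma components_closed:
  assumes "C \<in> components X L" and "x \<in> C" and "y \<in> X" and "{x, y} \<in> L"
  shows "y \<in> C"
proof -
  obtain u where C: "C = {v. connected_in X L u v}"
    using assms(1) by (auto simp: components_def)
  have "x \<in> X"
    using assms(1,2) components_subset by blast
  with assms C show ?thesis
    by (auto intro: connected_in_trans connected_in_edge)
qed

lemma walk_exits_component:
  "walk_in Y L (x # p) \<Longrightarrow> x \<in> C \<Longrightarrow> last (x # p) \<notin> C \<Longrightarrow> C \<in> components X L \<Longrightarrow>
   set p \<inter> (Y - X) \<noteq> {}"
proof (induction p arbitrary: x)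
  case (Cons y p)
  show ?case
  proof (cases "y \<in> C")
    case True
    with Cons show ?thesis by auto
  next
    case False
    with Cons.prems components_closed have "y \<notin> X"
      by (metis walk_in_Cons_Cons)
    with Cons.prems show ?thesis
      by (auto dest: walk_in_set)
  qed
qed simp

lemma csp_paths_rev: "p \<in> csp_paths X L M \<Longrightarrow> rev p \<in> csp_paths X L M"
  by (auto simp: csp_paths_def hd_rev last_rev)

lemma csp_paths_mono: "p \<in> csp_paths X L M \<Longrightarrow> X \<subseteq> Y \<Longrightarrow> p \<in> csp_paths Y L M"
  by (auto simp: csp_paths_def intro: walk_in_mono)

lemma csp_paths_append:
  assumes "walk_in X L xs" and "walk_in X L ys" and "{last xs, hd ys} \<in> L"
    and "distinct (xs @ ys)" and "hd xs \<in> M" and "last ys \<in> M"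
  shows "xs @ ys \<in> csp_paths X L M"
proof -
  have "xs \<noteq> []" and "ys \<noteq> []"
    using assms(1,2) by auto
  then have "hd xs \<noteq> last ys"
    using assms(4) by (metis disjoint_iff distinct_append hd_in_set last_in_set)
  with assms \<open>xs \<noteq> []\<close> \<open>ys \<noteq> []\<close> show ?thesis
    unfolding csp_paths_def by (auto simp: walk_in_append)
qed

lemma csp_path_detour:
  assumes p: "p1 @ w # c @ y # d \<in> csp_paths X L M"
    and R: "walk_in X L (a @ [y])" "distinct (a @ [y])" "hd (a @ [y]) = u"
    and wu: "{w, u} \<in> L" and fresh: "set a \<inter> set (p1 @ w # c @ y # d) = {}"
  shows "p1 @ w # a @ y # d \<in> csp_paths X L M"
proof -
  have walk: "walk_in X L (p1 @ w # c @ y # d)" and dist: "distinct (p1 @ w # c @ y # d)"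
    and ends: "hd (p1 @ w # c @ y # d) \<in> M" "last (p1 @ w # c @ y # d) \<in> M"
    using p by (auto simp: csp_paths_def)
  have "walk_in X L (p1 @ [w])"
    using walk walk_in_prefix[of X L "p1 @ [w]"] by simp
  moreover have "walk_in X L (a @ y # d)"
    using R(1) walk_in_suffix[of X L "p1 @ w # c" "y # d"] walk by (auto intro: walk_in_join)
  moreover have "hd (a @ y # d) = u"
    using R(3) by (cases a) auto
  moreover have "distinct ((p1 @ [w]) @ a @ y # d)"
    using dist fresh R(2) by auto
  ultimately show ?thesis
    using csp_paths_append[of X L "p1 @ [w]" "a @ y # d" M] wu ends by (cases p1) auto
qed

text \<open>Follow the path from \<open>u\<close> to \<open>m\<close> until it first meets \<open>p\<close> or a monitor, and splice it
  into \<open>p\<close> behind \<open>w\<close> (reversing \<open>p\<close> if it meets \<open>p\<close> before \<open>w\<close>).\<close>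
lemma csp_path_reroute:
  assumes p: "p \<in> csp_paths X L M" and "w \<in> set p" and "u \<notin> set p" and wu: "{w, u} \<in> L"
    and "m \<in> M" and "connected_in (X - {w}) L u m"
  shows "\<exists>p'\<in>csp_paths X L M. u \<in> set p'"
proof -
  obtain q where q: "walk_in (X - {w}) L q" "distinct q" "hd q = u" "last q = m"
    using connected_in_path[OF assms(6)] by blast
  have "q \<noteq> []"
    using q(1) by auto
  then have "\<exists>z\<in>set q. z \<in> set p \<union> M"
    using q(4) \<open>m \<in> M\<close> by auto
  from split_list_first_prop[OF this] obtain a y b where q_split: "q = a @ y # b"
    and y: "y \<in> set p \<union> M" and a: "\<forall>z\<in>set a. z \<notin> set p \<union> M"
    by blast
  have R: "walk_in (X - {w}) L (a @ [y])" "distinct (a @ [y])" "hd (a @ [y]) = u"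
    using q q_split walk_in_prefix[of "X - {w}" L "a @ [y]" b] by (auto simp: hd_append)
  have "y \<noteq> w"
    using walk_in_set[OF R(1)] by auto
  have RX: "walk_in X L (a @ [y])"
    using R(1) walk_in_mono by blast
  have "u \<in> set (a @ [y])"
    using R(3) by (cases a) auto
  have a_fresh: "set a \<inter> set p = {}"
    using a by auto
  obtain p1 p2 where p_split: "p = p1 @ w # p2"
    using \<open>w \<in> set p\<close> split_list by metis
  consider "y \<notin> set p" | "y \<in> set p2" | "y \<in> set p1"
    using y p_split \<open>y \<noteq> w\<close> by auto
  then show ?thesis
  proof cases
    case 1
    have "walk_in X L (p1 @ [w])"
      using p p_split walk_in_prefix[of X L "p1 @ [w]" p2] by (simp add: csp_paths_def)
    moreover have "hd (p1 @ [w]) \<in> M"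
      using p p_split by (cases p1) (auto simp: csp_paths_def)
    moreover have "distinct ((p1 @ [w]) @ a @ [y])"
      using p p_split a_fresh 1 R(2) by (auto simp: csp_paths_def)
    moreover have "last (p1 @ [w]) = w" and "hd (a @ [y]) = u" and "y \<in> M"
      using R(3) y 1 by auto
    ultimately have "(p1 @ [w]) @ a @ [y] \<in> csp_paths X L M"
      using csp_paths_append[of X L "p1 @ [w]" "a @ [y]" M] RX wu by simp
    with \<open>u \<in> set (a @ [y])\<close> show ?thesis
      by (intro bexI[of _ "(p1 @ [w]) @ a @ [y]"]) auto
  next
    case 2
    then obtain c d where "p2 = c @ y # d"
      using split_list by metis
    then have "p1 @ w # c @ y # d \<in> csp_paths X L M" and "set a \<inter> set (p1 @ w # c @ y # d) = {}"
      using p p_split a_fresh by simp_all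
    then have "p1 @ w # a @ y # d \<in> csp_paths X L M"
      by (rule csp_path_detour[OF _ RX R(2,3) wu])
    with \<open>u \<in> set (a @ [y])\<close> show ?thesis
      by (intro bexI[of _ "p1 @ w # a @ y # d"]) auto
  next
    case 3
    then obtain c d where "rev p1 = c @ y # d"
      using split_list set_rev by metis
    then have "rev p = rev p2 @ w # c @ y # d"
      using p_split by simp
    then have "rev p2 @ w # c @ y # d \<in> csp_paths X L M" and "set a \<inter> set (rev p2 @ w # c @ y # d) = {}"
      using csp_paths_rev[OF p] a_fresh by (metis, metis set_rev)
    then have "rev p2 @ w # a @ y # d \<in> csp_paths X L M"
      by (rule csp_path_detour[OF _ RX R(2,3) wu])
    with \<open>u \<in> set (a @ [y])\<close> show ?thesis
      by (intro bexI[of _ "rev p2 @ w # a @ y # d"]) auto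
  qed
qed

text \<open>The single-vertex-cut form of Menger's condition for two paths from \<open>u\<close> to monitors
  that meet only in \<open>u\<close>.\<close>
definition robustly_linked :: "'a set \<Rightarrow> 'a set set \<Rightarrow> 'a set \<Rightarrow> 'a \<Rightarrow> bool" where
  "robustly_linked X L M u \<longleftrightarrow>
     (\<exists>m\<in>M. connected_in X L u m) \<and> (\<forall>x. x \<noteq> u \<longrightarrow> (\<exists>m\<in>M. connected_in (X - {x}) L u m))"

lemma robustly_linked_next:
  assumes walk: "walk_in X L (u # w # r)" and dist: "distinct (u # w # r)"
    and last: "last (w # r) \<in> M" and u: "robustly_linked X L M u"
  shows "robustly_linked X L M w"
proof -
  have reach: "\<exists>m\<in>M. connected_in Y L w m" if "set (w # r) \<subseteq> Y" for Y
  proof -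
    have "walk_in Y L (w # r)"
      using walk that walk_in_restrict[of X L "w # r" Y] by auto
    with last show ?thesis
      unfolding connected_in_def by (intro bexI[of _ "last (w # r)"] exI[of _ "w # r"]) auto
  qed
  have "\<exists>m\<in>M. connected_in (X - {x}) L w m" if "x \<noteq> w" for x
  proof (cases "x \<in> set r")
    case True
    with dist have "x \<noteq> u" by auto
    with u obtain m where "m \<in> M" and "connected_in (X - {x}) L u m"
      unfolding robustly_linked_def by blast
    moreover have "connected_in (X - {x}) L w u"
      using walk dist that \<open>x \<noteq> u\<close> by (intro connected_in_edge) (auto simp: insert_commute walk_in_Cons)
    ultimately show ?thesis
      by (blast intro: connected_in_trans)
  next
    case False
    with that walk_in_set[OF walk] show ?thesis
      by (intro reach) auto
  qed
  moreover have "\<exists>m\<in>M. connected_in X L w m"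
    using walk_in_set[OF walk] by (intro reach) auto
  ultimately show ?thesis
    unfolding robustly_linked_def by blast
qed

lemma csp_path_through_robustly_linked_hd:
  assumes "walk_in X L q" and "distinct q" and "last q \<in> M"
    and "robustly_linked X L M (hd q)" and "hd q \<notin> M"
  shows "\<exists>p\<in>csp_paths X L M. hd q \<in> set p"
  using assms
proof (induction q)
  case (Cons u q)
  then obtain w r where q: "q = w # r"
    by (cases q) auto
  have wu: "{w, u} \<in> L"
    using Cons.prems(1) q by (simp add: insert_commute)
  have "w \<noteq> u"
    using Cons.prems(2) q by auto
  then obtain m where "m \<in> M" and m: "connected_in (X - {w}) L u m"
    using Cons.prems(4) unfolding robustly_linked_def by auto
  obtain R where R: "walk_in (X - {w}) L R" "distinct R" "hd R = u" "last R = m"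
    using connected_in_path[OF m] by blast
  show ?case
  proof (cases "w \<in> M")
    case True
    have "walk_in X L R"
      using R(1) walk_in_mono by blast
    moreover have "w \<notin> set R"
      using walk_in_set[OF R(1)] by auto
    moreover have "w \<in> X"
      using Cons.prems(1) q by (simp add: walk_in_Cons)
    ultimately have "[w] @ R \<in> csp_paths X L M"
      using R(2-4) wu True \<open>m \<in> M\<close> by (intro csp_paths_append) auto
    moreover have "u \<in> set R"
      using R(1,3) by (cases R) auto
    ultimately show ?thesis
      by (intro bexI[of _ "[w] @ R"]) auto
  next
    case False
    have "walk_in X L q" "distinct q" "last q \<in> M"
      using Cons.prems(1-3) q by auto
    moreover have "robustly_linked X L M (hd q)"
      using robustly_linked_next[of X L u w r M] Cons.prems q by simp
    ultimately obtain p where p: "p \<in> csp_paths X L M" "w \<in> set p"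
      using Cons.IH False q by auto
    show ?thesis
    proof (cases "u \<in> set p")
      case False
      with csp_path_reroute[OF p _ wu \<open>m \<in> M\<close> m] show ?thesis
        by simp
    qed (use p in auto)
  qed
qed simp

lemma csp_path_through_robustly_linked:
  assumes "robustly_linked X L M u" and "u \<notin> M"
  shows "\<exists>p\<in>csp_paths X L M. u \<in> set p"
proof -
  obtain m where "m \<in> M" and "connected_in X L u m"
    using assms(1) unfolding robustly_linked_def by blast
  then obtain q where "walk_in X L q" "distinct q" "hd q = u" "last q = m"
    using connected_in_path[of X L u m] by blast
  with assms csp_path_through_robustly_linked_hd[of X L q M] \<open>m \<in> M\<close> show ?thesis
    by simp
qed

lemma monitor_reachable_if_cut_condition:
  assumes "cut_condition V L M S c" and "V' \<subseteq> V" and "card V' \<le> c" and "card (V' \<inter> M) \<le> 1"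
    and "s \<in> S" and "s \<in> V - V'"
  shows "\<exists>m\<in>M. connected_in (V - V') L s m"
proof -
  let ?C = "{v. connected_in (V - V') L s v}"
  have "?C \<in> components (V - V') L"
    using assms(6) unfolding components_def by blast
  moreover have "s \<in> ?C"
    using assms(6) by (simp add: connected_in_refl)
  ultimately have "?C \<inter> M \<noteq> {}"
    using assms(1)[unfolded cut_condition_def, rule_format, OF assms(2-4)] assms(5) by blast
  then show ?thesis
    by blast
qed

lemma robustly_linked_if_cut_condition:
  assumes V: "undirected_graph V L" and cut: "cut_condition V L M S (k + 1)"
    and F: "F \<subseteq> V - M" "card F \<le> k" and s: "s \<in> S" "s \<in> V - F"
  shows "robustly_linked (V - F) L M s"
proof -
  have reach: "\<exists>m\<in>M. connected_in (V - F - ({x} - {s})) L s m" for x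
  proof -
    define V' where "V' = F \<union> ({x} - {s}) \<inter> V"
    have "finite F"
      using V F(1) finite_subset unfolding undirected_graph_def by blast
    then have "card V' \<le> card F + card (({x} - {s}) \<inter> V)"
      unfolding V'_def by (intro card_Un_le)
    also have "\<dots> \<le> k + 1"
      using F(2) card_mono[of "{x}" "({x} - {s}) \<inter> V"] by fastforce
    finally have "card V' \<le> k + 1" .
    moreover have "V' \<inter> M \<subseteq> {x}"
      using F(1) unfolding V'_def by auto
    then have "card (V' \<inter> M) \<le> 1"
      using card_mono[of "{x}" "V' \<inter> M"] by simp
    moreover have "V - V' = V - F - ({x} - {s})"
      unfolding V'_def by auto
    moreover have "V' \<subseteq> V"
      using F(1) unfolding V'_def by auto
    ultimately show ?thesis
      using monitor_reachable_if_cut_condition[OF cut, of V' s] s by auto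
  qed
  show ?thesis
    unfolding robustly_linked_def
  proof (intro conjI allI impI)
    show "\<exists>m\<in>M. connected_in (V - F) L s m"
      using reach[of s] by simp
    show "\<exists>m\<in>M. connected_in (V - F - {x}) L s m" if "x \<noteq> s" for x
      using reach[of x] that by (simp add: insert_Diff_if)
  qed
qed

lemma k_identifiable_if_cut_condition:
  assumes V: "undirected_graph V L" and S: "S \<subseteq> V - M" and cut: "cut_condition V L M S (k + 1)"
  shows "k_identifiable V L M S k"
proof -
  have separate: "failed_paths (csp_paths V L M) F1 \<noteq> failed_paths (csp_paths V L M) F2"
    if F2: "F2 \<subseteq> V - M" "card F2 \<le> k" and s: "s \<in> S" "s \<in> F1" "s \<notin> F2" for F1 F2 s
  proof -
    have "robustly_linked (V - F2) L M s"
      using robustly_linked_if_cut_condition[OF V cut F2] s S by auto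
    moreover have "s \<notin> M"
      using s S by auto
    ultimately obtain p where p: "p \<in> csp_paths (V - F2) L M" "s \<in> set p"
      by (metis csp_path_through_robustly_linked)
    have "p \<in> csp_paths V L M"
      by (rule csp_paths_mono[OF p(1)]) auto
    moreover have "set p \<inter> F2 = {}"
      using p(1) walk_in_set[of "V - F2" L p] by (auto simp: csp_paths_def)
    ultimately have "p \<in> failed_paths (csp_paths V L M) F1 - failed_paths (csp_paths V L M) F2"
      using p(2) s by (auto simp: failed_paths_def)
    then show ?thesis
      by blast
  qed
  show ?thesis
    unfolding k_identifiable_def
  proof (intro allI impI)
    fix F1 F2
    assume F: "F1 \<subseteq> V - M" "F2 \<subseteq> V - M" "card F1 \<le> k" "card F2 \<le> k"
      and "F1 \<inter> S \<noteq> F2 \<inter> S"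
    then obtain s where "s \<in> S" and "s \<in> F1 \<and> s \<notin> F2 \<or> s \<in> F2 \<and> s \<notin> F1"
      by blast
    then show "failed_paths (csp_paths V L M) F1 \<noteq> failed_paths (csp_paths V L M) F2"
    proof (elim disjE conjE)
      assume "s \<in> F1" "s \<notin> F2"
      with separate[OF F(2,4) \<open>s \<in> S\<close>] show ?thesis by blast
    next
      assume "s \<in> F2" "s \<notin> F1"
      with separate[OF F(1,3) \<open>s \<in> S\<close>] show ?thesis by metis
    qed
  qed
qed

lemma csp_path_meets_separator_twice:
  assumes p: "p \<in> csp_paths V L M" and "s \<in> set p"
    and C: "C \<in> components (V - V') L" "s \<in> C" "C \<inter> M = {}"
  shows "\<exists>a\<in>set p \<inter> V'. \<exists>b\<in>set p \<inter> V'. a \<noteq> b"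
proof -
  obtain xs ys where p_split: "p = xs @ s # ys"
    using \<open>s \<in> set p\<close> split_list by metis
  have walk: "walk_in V L (xs @ s # ys)" and dist: "distinct (xs @ s # ys)"
    and ends: "hd (xs @ s # ys) \<in> M" "last (xs @ s # ys) \<in> M"
    using p p_split by (auto simp: csp_paths_def)
  have "walk_in V L (s # ys)"
    using walk walk_in_suffix[of V L xs "s # ys"] by simp
  moreover have "last (s # ys) \<notin> C"
    using ends(2) C(3) by (cases ys) auto
  ultimately have "set ys \<inter> (V - (V - V')) \<noteq> {}"
    using walk_exits_component[OF _ C(2) _ C(1)] by blast
  then obtain b where b: "b \<in> set ys" "b \<in> V'"
    by auto
  have "walk_in V L (s # rev xs)"
    using walk walk_in_prefix[of V L "xs @ [s]" ys] walk_in_rev[of V L "xs @ [s]"] by simp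
  moreover have "last (s # rev xs) \<notin> C"
    using ends(1) C(3) by (cases xs) (auto simp: last_rev)
  ultimately have "set (rev xs) \<inter> (V - (V - V')) \<noteq> {}"
    using walk_exits_component[OF _ C(2) _ C(1)] by blast
  then obtain a where a: "a \<in> set xs" "a \<in> V'"
    by auto
  from a b dist have "a \<noteq> b"
    by auto
  with a b show ?thesis
    unfolding p_split by auto
qed

lemma exists_point_covering_Int:
  assumes "finite A" and "card (A \<inter> B) \<le> 1"
  shows "\<exists>v. A \<inter> B \<subseteq> {v} \<and> card (A - {v}) = card A - 1"
proof (cases "A \<inter> B = {}")
  case True
  show ?thesis
  proof (cases "A = {}")
    case False
    then obtain v where "v \<in> A" by blast
    with True assms(1) show ?thesis by (intro exI[of _ v]) auto
  qed simp
next
  case False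
  then obtain v where "A \<inter> B = {v}"
    using assms card_le_Suc0_iff_eq[of "A \<inter> B"] by auto
  moreover from this have "v \<in> A"
    by auto
  ultimately show ?thesis by (intro exI[of _ v]) auto
qed

lemma cut_condition_if_k_identifiable:
  assumes V: "undirected_graph V L" and S: "S \<subseteq> V - M" and "k \<ge> 1"
    and ident: "k_identifiable V L M S k"
  shows "cut_condition V L M S k"
  unfolding cut_condition_def
proof (intro allI impI ballI)
  fix V' C
  assume V': "V' \<subseteq> V" "card V' \<le> k" "card (V' \<inter> M) \<le> 1"
    and C: "C \<in> components (V - V') L" and "C \<inter> S \<noteq> {}"
  then obtain s where s: "s \<in> C" "s \<in> S" by blast
  have "s \<notin> V'"
    using components_subset[OF C] s by blast
  show "C \<inter> M \<noteq> {}"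
  proof
    assume CM: "C \<inter> M = {}"
    have "finite V'"
      using V V' finite_subset unfolding undirected_graph_def by blast
    then obtain v where v: "V' \<inter> M \<subseteq> {v}" "card (V' - {v}) = card V' - 1"
      using exists_point_covering_Int V'(3) by blast
    define F where "F = V' - {v}"
    have "set p \<inter> F \<noteq> {}" if "p \<in> csp_paths V L M" "s \<in> set p" for p
      using csp_path_meets_separator_twice[OF that C s(1) CM] unfolding F_def by blast
    then have "failed_paths (csp_paths V L M) F = failed_paths (csp_paths V L M) (insert s F)"
      unfolding failed_paths_def by blast
    moreover have "F \<subseteq> V - M" "insert s F \<subseteq> V - M"
      using V' v s S unfolding F_def by auto
    moreover have "card F \<le> k" "card (insert s F) \<le> k"
      using v V'(2) \<open>k \<ge> 1\<close> \<open>finite V'\<close> card_insert_le[of F s] unfolding F_def by (auto simp: card_insert_if)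
    moreover have "F \<inter> S \<noteq> insert s F \<inter> S"
      using s \<open>s \<notin> V'\<close> unfolding F_def by auto
    ultimately show False
      using ident unfolding k_identifiable_def by blast
  qed
qed

theorem lemma5:
  fixes V :: "'a set" and L :: "'a set set" and M S :: "'a set" and k :: nat
  assumes "undirected_graph V L" and "connected_graph V L"
    and "M \<subseteq> V" and "S \<subseteq> V - M" and "k \<ge> 1"
  shows "(cut_condition V L M S (k + 1) \<longrightarrow> k_identifiable V L M S k)
       \<and> (k_identifiable V L M S k \<longrightarrow> cut_condition V L M S k)"
  using k_identifiable_if_cut_condition[OF assms(1,4)]
    cut_condition_if_k_identifiable[OF assms(1,4,5)] by blast

end
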